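(* Let $r\in\mathbb N$, $m\in\mathbb N$, $p\in(0,1)$, and let $h\in L^4\big((\{0,1\}^m)^r,\mu_{m,p}^{\otimes r}\big)$ be symmetric. For $0\le j\le r$ let $h_j(x_1,\ldots,x_j)=\int_{(\{0,1\}^m)^{r-j}}h(x_1,\ldots,x_r)\,d\mu_{m,p}^{\otimes(r-j)}(x_{j+1},\ldots,x_r)$ (so $h_0$ is the constant $\int h\,d\mu_{m,p}^{\otimes r}$) and $\tilde h_j=\Phi_{x_1}\cdots\Phi_{x_j}h_j$. Then for $0\le i<j\le r$, $$\|\tilde h_j\ast_j^i\tilde h_j\|_2\lesssim\|h_j\ast_j^ih_j\|_2,\qquad \|\tilde h_j\ast_i^i\tilde h_j\|_2\lesssim\|h_j\ast_i^ih_j\|_2,$$ $$\|\tilde h_j\ast_i^i\tilde h_i\|_2\lesssim\|h_{j-i}\|_2\left|\int_{(\{0,1\}^m)^r}h\,d\mu_{m,p}^{\otimes r}\right|+\sum_{s=1}^i\|h_{j-i+s}\ast_s^sh_s\|_2,$$ where the implicit constants depend only on $r$.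
   Context: $\mu_{m,p}$ is the measure on $\{0,1\}^m$ with $\mu_{m,p}(x)=p^{|x|}(1-p)^{m-|x|}$, $|x|=\sum_ix_i$; norms are $L^2$ norms with respect to the appropriate product of $\mu_{m,p}$. $\Phi_{x_i}f(x)=f(x)-\int_{\{0,1\}^m}f(x)\,d\mu_{m,p}(x_i)$. Contraction: for $f$ on $(\{0,1\}^m)^k$, $g$ on $(\{0,1\}^m)^l$, $0\le a\le b\le k\wedge l$: $f\ast_b^ag(x_1,\ldots,x_{b-a},y_1,\ldots,y_{k-b},z_1,\ldots,z_{l-b})=\int_{(\{0,1\}^m)^a}f(w,x,y)g(w,x,z)\,d\mu_{m,p}^{\otimes a}(w)$. $a\lesssim b$ means $a\le Cb$ for a constant $C$. *)

theory Defs
  imports Complex_Main "HOL-Library.FuncSet"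
begin

text \<open>Points of {0,1}^m are encoded as subsets of {0..<m} (the support of the 0/1 vector).
  A function of k arguments in {0,1}^m is a map on tuples \<open>nat \<Rightarrow> nat set\<close>;
  only its values on the extensional tuples in \<open>tuples m k\<close> are ever used.\<close>

definition cube :: "nat \<Rightarrow> nat set set" where
  "cube m = Pow {..<m}"

definition mu :: "nat \<Rightarrow> real \<Rightarrow> nat set \<Rightarrow> real" where
  "mu m p x = p ^ card x * (1 - p) ^ (m - card x)"

definition tuples :: "nat \<Rightarrow> nat \<Rightarrow> (nat \<Rightarrow> nat set) set" where
  "tuples m k = PiE {..<k} (\<lambda>_. cube m)"

definition weight :: "nat \<Rightarrow> real \<Rightarrow> nat \<Rightarrow> (nat \<Rightarrow> nat set) \<Rightarrow> real" where
  "weight m p k x = (\<Prod>i<k. mu m p (x i))"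

definition intk :: "nat \<Rightarrow> real \<Rightarrow> nat \<Rightarrow> ((nat \<Rightarrow> nat set) \<Rightarrow> real) \<Rightarrow> real" where
  "intk m p k f = (\<Sum>x\<in>tuples m k. weight m p k x * f x)"

definition norm2 :: "nat \<Rightarrow> real \<Rightarrow> nat \<Rightarrow> ((nat \<Rightarrow> nat set) \<Rightarrow> real) \<Rightarrow> real" where
  "norm2 m p k f = sqrt (intk m p k (\<lambda>x. (f x)\<^sup>2))"

definition app :: "nat \<Rightarrow> (nat \<Rightarrow> 'a) \<Rightarrow> (nat \<Rightarrow> 'a) \<Rightarrow> nat \<Rightarrow> 'a" where
  "app a w y = (\<lambda>i. if i < a then w i else y (i - a))"

definition sh :: "nat \<Rightarrow> (nat \<Rightarrow> 'a) \<Rightarrow> nat \<Rightarrow> 'a" where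
  "sh n u = (\<lambda>i. u (i + n))"

definition symmetric_fun :: "nat \<Rightarrow> nat \<Rightarrow> ((nat \<Rightarrow> nat set) \<Rightarrow> real) \<Rightarrow> bool" where
  "symmetric_fun m r h \<longleftrightarrow>
     (\<forall>\<sigma> x. bij_betw \<sigma> {..<r} {..<r} \<longrightarrow> x \<in> tuples m r \<longrightarrow>
        h (restrict (x \<circ> \<sigma>) {..<r}) = h x)"

definition hj :: "nat \<Rightarrow> real \<Rightarrow> nat \<Rightarrow> ((nat \<Rightarrow> nat set) \<Rightarrow> real) \<Rightarrow> nat
                   \<Rightarrow> (nat \<Rightarrow> nat set) \<Rightarrow> real" where
  "hj m p r h j x = (\<Sum>y\<in>tuples m (r - j). weight m p (r - j) y * h (restrict (app j x y) {..<r}))"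

text \<open>Phi_{x_i} f (x) = f(x) - integral of f over the i-th coordinate (0-based index i)\<close>
definition Phi :: "nat \<Rightarrow> real \<Rightarrow> nat \<Rightarrow> ((nat \<Rightarrow> nat set) \<Rightarrow> real) \<Rightarrow> (nat \<Rightarrow> nat set) \<Rightarrow> real" where
  "Phi m p i f x = f x - (\<Sum>z\<in>cube m. mu m p z * f (x(i := z)))"

fun phis :: "nat \<Rightarrow> real \<Rightarrow> nat \<Rightarrow> ((nat \<Rightarrow> nat set) \<Rightarrow> real) \<Rightarrow> (nat \<Rightarrow> nat set) \<Rightarrow> real" where
  "phis m p 0 f = f"
| "phis m p (Suc j) f = Phi m p j (phis m p j f)"

definition htilde :: "nat \<Rightarrow> real \<Rightarrow> nat \<Rightarrow> ((nat \<Rightarrow> nat set) \<Rightarrow> real) \<Rightarrow> nat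
                       \<Rightarrow> (nat \<Rightarrow> nat set) \<Rightarrow> real" where
  "htilde m p r h j = phis m p j (hj m p r h j)"

text \<open>Contraction f *_b^a g for f of k arguments and g of l arguments. The result is a function
  of (b-a)+(k-b)+(l-b) arguments u = (x_1..x_{b-a}, y_1..y_{k-b}, z_1..z_{l-b});
  f is evaluated at (w,x,y) and g at (w,x,z).\<close>
definition contr :: "nat \<Rightarrow> real \<Rightarrow> nat \<Rightarrow> nat \<Rightarrow> nat \<Rightarrow> nat
     \<Rightarrow> ((nat \<Rightarrow> nat set) \<Rightarrow> real) \<Rightarrow> ((nat \<Rightarrow> nat set) \<Rightarrow> real) \<Rightarrow> (nat \<Rightarrow> nat set) \<Rightarrow> real" where
  "contr m p k l a b f g u =
     (\<Sum>w\<in>tuples m a. weight m p a w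
        * f (restrict (app a w u) {..<k})
        * g (restrict (app a w (app (b - a) u (sh (k - a) u))) {..<l}))"

end

theory Submission
  imports Defs "HOL-Analysis.L2_Norm"
begin

text \<open>
  Write \<open>avg\<^sub>k\<close> for averaging out the \<open>k\<close>-th coordinate, so \<open>Phi\<^sub>k = 1 - avg\<^sub>k\<close>. The
  \<open>avg\<^sub>k\<close> are commuting self-adjoint projections of \<open>L\<^sup>2\<close>, hence each \<open>Phi\<^sub>k\<close> is a contraction.

  (1) \<open>f *\<^sub>j\<^sup>i f\<close> is the partial integral \<open>N(u) = \<integral> f(w,u)\<^sup>2 dw\<close>. A \<open>Phi\<close> acting on \<open>w\<close>
  decreases \<open>N\<close> pointwise; one acting on a coordinate \<open>k\<close> of \<open>u\<close> leaves it below
  \<open>2 N + 2 avg\<^sub>k N\<close>, which costs a factor 4 in \<open>L\<^sup>2\<close>.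

  (2) \<open>f *\<^sub>i\<^sup>i f\<close> is the Gram kernel \<open>G(v,v') = \<integral> f(w,v) f(w,v') dw\<close>. A \<open>Phi\<close> on a free
  coordinate \<open>k\<close> turns \<open>G\<close> into \<open>Phi\<^sub>k Phi\<^sub>k\<^sub>+\<^sub>c G\<close>, and \<open>\<parallel>G\<parallel>\<^sub>2\<close> is unchanged when the roles
  of \<open>w\<close> and \<open>v\<close> are exchanged, which moves a \<open>Phi\<close> on \<open>w\<close> to a free coordinate.

  (3) In \<open>h~\<^sub>j *\<^sub>i\<^sup>i h~\<^sub>i\<close> the \<open>Phi\<close>'s on the free coordinates factor out, and those on the
  integrated coordinates of \<open>h~\<^sub>j\<close> can be dropped, since \<open>Phi\<^sub>1 \<dots> Phi\<^sub>i h\<^sub>i\<close> is orthogonal to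
  every function not depending on one of its coordinates. Then the \<open>Phi\<close>'s are removed from
  \<open>h\<^sub>i\<close> one at a time: by symmetry of \<open>h\<close>, averaging \<open>h\<^sub>a\<close> over a coordinate gives \<open>h\<^sub>a\<^sub>-\<^sub>1\<close>,
  so each removal splits a term into two of the same shape with smaller indices. After \<open>i\<close>
  steps at most \<open>2\<^sup>i\<close> terms \<open>h\<^sub>c\<^sub>+\<^sub>s *\<^sub>s\<^sup>s h\<^sub>s\<close> remain, the one with \<open>s = 0\<close> being \<open>h\<^sub>c \<integral> h\<close>.
\<close>

definition avg :: "nat \<Rightarrow> real \<Rightarrow> nat \<Rightarrow> ((nat \<Rightarrow> nat set) \<Rightarrow> real) \<Rightarrow> (nat \<Rightarrow> nat set) \<Rightarrow> real" where
  "avg m p k F x = (\<Sum>z\<in>cube m. mu m p z * F (x(k := z)))"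

lemma Phi_eq_avg: "Phi m p k F = (\<lambda>x. F x - avg m p k F x)"
  by (simp add: Phi_def avg_def fun_eq_iff)

lemma finite_cube [simp]: "finite (cube m)"
  by (simp add: cube_def)

lemma finite_tuples [simp]: "finite (tuples m k)"
  by (simp add: tuples_def finite_PiE)

lemma mu_nonneg: "0 \<le> p \<Longrightarrow> p \<le> 1 \<Longrightarrow> 0 \<le> mu m p z"
  by (simp add: mu_def)

lemma weight_nonneg: "0 \<le> p \<Longrightarrow> p \<le> 1 \<Longrightarrow> 0 \<le> weight m p k x"
  by (simp add: weight_def mu_nonneg prod_nonneg)

lemma sum_mu_cube: "(\<Sum>z\<in>cube m. mu m p z) = 1"
proof -
  have "(\<Sum>z\<in>cube m. mu m p z) = (\<Prod>i<m. p + (1 - p))"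
    unfolding prod_add[OF finite_lessThan] cube_def mu_def
    by (intro sum.cong refl) (auto simp: card_Diff_subset finite_subset)
  then show ?thesis
    by simp
qed

lemma avg_fun_upd [simp]: "avg m p k F (x(k := z)) = avg m p k F x"
  by (simp add: avg_def)

lemma avg_const: "avg m p k (\<lambda>_. c) x = c"
  by (simp add: avg_def sum_mu_cube flip: sum_distrib_right)

lemma avg_avg [simp]: "avg m p k (avg m p k F) x = avg m p k F x"
  by (simp add: avg_def[of m p k "avg m p k F"] sum_mu_cube flip: sum_distrib_right)

lemma avg_commute: "a \<noteq> b \<Longrightarrow> avg m p a (avg m p b F) x = avg m p b (avg m p a F) x"
  unfolding avg_def sum_distrib_left
  by (subst sum.swap) (simp add: fun_upd_twist mult.left_commute)

lemma avg_cong: "(\<And>z. F (x(k := z)) = G (x(k := z))) \<Longrightarrow> avg m p k F x = avg m p k G x"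
  by (simp add: avg_def)

lemma avg_diff: "avg m p k (\<lambda>y. F y - G y) x = avg m p k F x - avg m p k G x"
  by (simp add: avg_def algebra_simps sum_subtractf)

lemma avg_mult_right_indep:
  "(\<And>z. G (x(k := z)) = G x) \<Longrightarrow> avg m p k (\<lambda>y. F y * G y) x = avg m p k F x * G x"
  unfolding avg_def sum_distrib_right by (simp add: algebra_simps)

lemma avg_mult_left_indep:
  "(\<And>z. G (x(k := z)) = G x) \<Longrightarrow> avg m p k (\<lambda>y. G y * F y) x = G x * avg m p k F x"
  using avg_mult_right_indep[of G x k m p F] by (simp add: mult.commute)

lemma avg_nonneg: "0 \<le> p \<Longrightarrow> p \<le> 1 \<Longrightarrow> (\<And>z. 0 \<le> F (x(k := z))) \<Longrightarrow> 0 \<le> avg m p k F x"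
  unfolding avg_def by (intro sum_nonneg mult_nonneg_nonneg mu_nonneg) auto

lemma avg_variance:
  "avg m p k (\<lambda>y. (F y - avg m p k F x)\<^sup>2) x = avg m p k (\<lambda>y. (F y)\<^sup>2) x - (avg m p k F x)\<^sup>2"
proof -
  define M where "M = avg m p k F x"
  have "avg m p k (\<lambda>y. (F y - M)\<^sup>2) x
      = avg m p k (\<lambda>y. (F y)\<^sup>2) x - 2 * M * avg m p k F x + M\<^sup>2 * (\<Sum>z\<in>cube m. mu m p z)"
    by (simp add: avg_def power2_diff algebra_simps sum.distrib sum_subtractf
        sum_distrib_left sum_distrib_right)
  then show ?thesis
    by (simp add: M_def sum_mu_cube power2_eq_square)
qed

lemma avg_square_le:
  assumes "0 \<le> p" "p \<le> 1"
  shows "(avg m p k F x)\<^sup>2 \<le> avg m p k (\<lambda>y. (F y)\<^sup>2) x"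
proof -
  have "0 \<le> avg m p k (\<lambda>y. (F y - avg m p k F x)\<^sup>2) x"
    using assms by (intro avg_nonneg) simp_all
  then show ?thesis
    by (simp add: avg_variance)
qed

lemma avg_Phi_square_le:
  "avg m p k (\<lambda>y. (Phi m p k F y)\<^sup>2) x \<le> avg m p k (\<lambda>y. (F y)\<^sup>2) x"
proof -
  have "avg m p k (\<lambda>y. (Phi m p k F y)\<^sup>2) x = avg m p k (\<lambda>y. (F y - avg m p k F x)\<^sup>2) x"
    by (rule avg_cong) (simp add: Phi_eq_avg)
  then show ?thesis
    by (simp add: avg_variance)
qed

lemma avg_phis_commute: "t \<le> k \<Longrightarrow> avg m p k (phis m p t F) = phis m p t (avg m p k F)"
proof (induction t)
  case 0
  then show ?case by simp
next
  case (Suc t)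
  then have IH: "avg m p k (phis m p t F) = phis m p t (avg m p k F)" and "k \<noteq> t"
    by auto
  show ?case
  proof
    fix x
    have "avg m p k (phis m p (Suc t) F) x
        = avg m p k (phis m p t F) x - avg m p k (avg m p t (phis m p t F)) x"
      by (simp add: Phi_eq_avg avg_diff)
    also have "\<dots> = phis m p (Suc t) (avg m p k F) x"
      using IH avg_commute[OF \<open>k \<noteq> t\<close>, of m p "phis m p t F" x] by (simp add: Phi_eq_avg)
    finally show "avg m p k (phis m p (Suc t) F) x = phis m p (Suc t) (avg m p k F) x" .
  qed
qed

lemma avg_phis_eq_0: "k < t \<Longrightarrow> avg m p k (phis m p t F) x = 0"
proof (induction t arbitrary: x)
  case 0
  then show ?case by simp
next
  case (Suc t)
  have "avg m p k (phis m p (Suc t) F) x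
      = avg m p k (phis m p t F) x - avg m p k (avg m p t (phis m p t F)) x"
    by (simp add: Phi_eq_avg avg_diff)
  also have "\<dots> = 0"
  proof (cases "k = t")
    case False
    with Suc have "avg m p k (phis m p t F) = (\<lambda>_. 0)"
      by auto
    then show ?thesis
      using avg_commute[OF False, of m p "phis m p t F" x] by (simp add: avg_const)
  qed simp
  finally show ?case .
qed

lemma tuples_iff: "v \<in> tuples m k \<longleftrightarrow> (\<forall>i<k. v i \<in> cube m) \<and> (\<forall>i\<ge>k. v i = undefined)"
  by (auto simp: tuples_def PiE_iff extensional_def not_less)

lemma tuples_0: "tuples m 0 = {\<lambda>_. undefined}"
  by (simp add: tuples_def)

lemma intk_0: "intk m p 0 F = F (\<lambda>_. undefined)"
  by (simp add: intk_def tuples_0 weight_def)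

lemma intk_cong: "(\<And>x. x \<in> tuples m k \<Longrightarrow> F x = G x) \<Longrightarrow> intk m p k F = intk m p k G"
  by (simp add: intk_def)

lemma intk_add: "intk m p k (\<lambda>x. F x + G x) = intk m p k F + intk m p k G"
  by (simp add: intk_def algebra_simps sum.distrib)

lemma intk_diff: "intk m p k (\<lambda>x. F x - G x) = intk m p k F - intk m p k G"
  by (simp add: intk_def algebra_simps sum_subtractf)

lemma intk_sum: "intk m p k (\<lambda>x. \<Sum>i\<in>I. F i x) = (\<Sum>i\<in>I. intk m p k (F i))"
  unfolding intk_def sum_distrib_left by (rule sum.swap)

lemma intk_cmult: "intk m p k (\<lambda>x. c * F x) = c * intk m p k F"
  unfolding intk_def sum_distrib_left by (simp add: mult.left_commute)

lemma intk_nonneg: "0 \<le> p \<Longrightarrow> p \<le> 1 \<Longrightarrow> (\<And>x. 0 \<le> F x) \<Longrightarrow> 0 \<le> intk m p k F"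
  unfolding intk_def by (intro sum_nonneg mult_nonneg_nonneg weight_nonneg) auto

lemma intk_mono:
  "0 \<le> p \<Longrightarrow> p \<le> 1 \<Longrightarrow> (\<And>x. x \<in> tuples m k \<Longrightarrow> F x \<le> G x) \<Longrightarrow> intk m p k F \<le> intk m p k G"
  unfolding intk_def by (intro sum_mono mult_left_mono weight_nonneg) auto

lemma avg_intk: "avg m p k (\<lambda>u. intk m p a (\<lambda>w. F w u)) u = intk m p a (\<lambda>w. avg m p k (F w) u)"
  unfolding avg_def intk_def sum_distrib_left
  by (subst sum.swap) (simp add: mult.left_commute)

definition ins :: "nat \<Rightarrow> nat \<Rightarrow> nat set \<Rightarrow> (nat \<Rightarrow> nat set) \<Rightarrow> nat \<Rightarrow> nat set" where
  "ins q k z y = restrict (\<lambda>i. if i < k then y i else if i = k then z else y (i - 1)) {..<Suc q}"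

definition del :: "nat \<Rightarrow> (nat \<Rightarrow> 'a) \<Rightarrow> nat \<Rightarrow> 'a" where
  "del k x = (\<lambda>i. if i < k then x i else x (Suc i))"

lemma ins_upd: "k \<le> q \<Longrightarrow> (ins q k z y)(k := z') = ins q k z' y"
  by (auto simp: ins_def fun_eq_iff)

lemma del_ins: "k \<le> q \<Longrightarrow> y \<in> tuples m q \<Longrightarrow> del k (ins q k z y) = y"
  by (auto simp: del_def ins_def tuples_iff fun_eq_iff)

lemma del_upd: "k < s \<Longrightarrow> del s (x(k := z)) = (del s x)(k := z)"
  by (auto simp: fun_eq_iff del_def)

lemma bij_betw_ins:
  assumes "k \<le> q"
  shows "bij_betw (\<lambda>(z, y). ins q k z y) (cube m \<times> tuples m q) (tuples m (Suc q))"
proof (rule bij_betw_byWitness[where f' = "\<lambda>v. (v k, restrict (del k v) {..<q})"])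
  show "\<forall>a\<in>cube m \<times> tuples m q. (\<lambda>v. (v k, restrict (del k v) {..<q})) ((\<lambda>(z, y). ins q k z y) a) = a"
    using assms by (auto simp: ins_def del_def tuples_iff fun_eq_iff)
  show "\<forall>a'\<in>tuples m (Suc q). (\<lambda>(z, y). ins q k z y) ((\<lambda>v. (v k, restrict (del k v) {..<q})) a') = a'"
    using assms by (auto simp: ins_def del_def tuples_iff fun_eq_iff)
  show "(\<lambda>(z, y). ins q k z y) ` (cube m \<times> tuples m q) \<subseteq> tuples m (Suc q)"
    using assms by (auto simp: ins_def tuples_iff)
  show "(\<lambda>v. (v k, restrict (del k v) {..<q})) ` tuples m (Suc q) \<subseteq> cube m \<times> tuples m q"
    using assms by (auto simp: del_def tuples_iff)
qed

lemma weight_ins: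
  assumes "k \<le> q" "y \<in> tuples m q"
  shows "weight m p (Suc q) (ins q k z y) = mu m p z * weight m p q y"
proof -
  define s where "s = (\<lambda>i::nat. if i < k then i else Suc i)"
  have inj: "inj_on s {..<q}"
    by (auto simp: s_def inj_on_def split: if_splits)
  have "i \<in> s ` {..<q}" if "i < Suc q" "i \<noteq> k" for i
    using that assms by (cases "i < k") (auto simp: s_def image_iff intro: bexI[where x="i - 1"])
  then have img: "s ` {..<q} = {..<Suc q} - {k}"
    by (auto simp: s_def)
  have "weight m p (Suc q) (ins q k z y)
      = mu m p (ins q k z y k) * (\<Prod>i\<in>{..<Suc q} - {k}. mu m p (ins q k z y i))"
    unfolding weight_def using assms by (subst prod.remove[of _ k]) auto
  also have "(\<Prod>i\<in>{..<Suc q} - {k}. mu m p (ins q k z y i)) = (\<Prod>i<q. mu m p (ins q k z y (s i)))"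
    unfolding img[symmetric] by (simp add: prod.reindex[OF inj])
  also have "\<dots> = weight m p q y"
    unfolding weight_def by (rule prod.cong) (auto simp: s_def ins_def)
  moreover have "ins q k z y k = z"
    using assms by (simp add: ins_def)
  ultimately show ?thesis
    by simp
qed

lemma intk_Suc_ins:
  assumes "k \<le> q"
  shows "intk m p (Suc q) F = (\<Sum>z\<in>cube m. mu m p z * intk m p q (\<lambda>y. F (ins q k z y)))"
proof -
  have "intk m p (Suc q) F
      = (\<Sum>zy\<in>cube m \<times> tuples m q. weight m p (Suc q) (ins q k (fst zy) (snd zy)) * F (ins q k (fst zy) (snd zy)))"
    unfolding intk_def
    by (rule sum.reindex_bij_betw[OF bij_betw_ins[OF assms], symmetric, unfolded case_prod_beta])
  also have "\<dots> = (\<Sum>zy\<in>cube m \<times> tuples m q. mu m p (fst zy) * (weight m p q (snd zy) * F (ins q k (fst zy) (snd zy))))"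
    by (rule sum.cong) (auto simp: weight_ins[OF assms])
  finally show ?thesis
    by (simp add: sum.cartesian_product case_prod_beta intk_def sum_distrib_left)
qed

lemma intk_avg:
  assumes "k < n"
  shows "intk m p n (avg m p k G) = intk m p n G"
proof -
  obtain q where n: "n = Suc q" and kq: "k \<le> q"
    using assms by (cases n) auto
  define A where "A = (\<lambda>y. \<Sum>z\<in>cube m. mu m p z * G (ins q k z y))"
  have "avg m p k G (ins q k z y) = A y" for z y
    by (simp add: avg_def A_def ins_upd[OF kq])
  then have "intk m p n (avg m p k G) = (\<Sum>z\<in>cube m. mu m p z * intk m p q A)"
    by (simp add: n intk_Suc_ins[OF kq])
  also have "\<dots> = intk m p q A"
    by (simp add: sum_mu_cube flip: sum_distrib_right)
  also have "\<dots> = (\<Sum>z\<in>cube m. mu m p z * intk m p q (\<lambda>y. G (ins q k z y)))"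
    unfolding A_def intk_sum intk_cmult ..
  also have "\<dots> = intk m p n G"
    unfolding n by (rule intk_Suc_ins[OF kq, symmetric])
  finally show ?thesis .
qed

lemma intk_avg_mult_commute:
  assumes "k < n"
  shows "intk m p n (\<lambda>v. avg m p k A v * B v) = intk m p n (\<lambda>v. A v * avg m p k B v)"
proof -
  have "intk m p n (\<lambda>v. avg m p k A v * B v) = intk m p n (avg m p k (\<lambda>v. avg m p k A v * B v))"
    by (rule intk_avg[OF assms, symmetric])
  also have "\<dots> = intk m p n (\<lambda>v. avg m p k A v * avg m p k B v)"
    by (rule intk_cong) (simp add: avg_mult_left_indep)
  also have "\<dots> = intk m p n (avg m p k (\<lambda>v. A v * avg m p k B v))"
    by (rule intk_cong) (simp add: avg_mult_right_indep)
  also have "\<dots> = intk m p n (\<lambda>v. A v * avg m p k B v)"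
    by (rule intk_avg[OF assms])
  finally show ?thesis .
qed

lemma intk_Phi_square_le:
  assumes "k < n" "0 \<le> p" "p \<le> 1"
  shows "intk m p n (\<lambda>v. (Phi m p k F v)\<^sup>2) \<le> intk m p n (\<lambda>v. (F v)\<^sup>2)"
proof -
  have "intk m p n (\<lambda>v. (Phi m p k F v)\<^sup>2) = intk m p n (avg m p k (\<lambda>v. (Phi m p k F v)\<^sup>2))"
    by (rule intk_avg[OF assms(1), symmetric])
  also have "\<dots> \<le> intk m p n (avg m p k (\<lambda>v. (F v)\<^sup>2))"
    by (intro intk_mono assms avg_Phi_square_le)
  also have "\<dots> = intk m p n (\<lambda>v. (F v)\<^sup>2)"
    by (rule intk_avg[OF assms(1)])
  finally show ?thesis .
qed

lemma intk_phis_square_le: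
  assumes "t \<le> n" "0 \<le> p" "p \<le> 1"
  shows "intk m p n (\<lambda>v. (phis m p t F v)\<^sup>2) \<le> intk m p n (\<lambda>v. (F v)\<^sup>2)"
  using assms(1)
proof (induction t)
  case (Suc t)
  then show ?case
    using intk_Phi_square_le[of t n p m "phis m p t F"] assms by simp
qed simp

lemma intk_del:
  assumes "k \<le> q"
  shows "intk m p (Suc q) (\<lambda>v. F (del k v)) = intk m p q F"
proof -
  have "intk m p (Suc q) (\<lambda>v. F (del k v)) = (\<Sum>z\<in>cube m. mu m p z * intk m p q F)"
    unfolding intk_Suc_ins[OF assms] by (simp add: del_ins[OF assms] cong: intk_cong)
  then show ?thesis
    by (simp add: sum_mu_cube flip: sum_distrib_right)
qed

definition join :: "nat \<Rightarrow> nat \<Rightarrow> (nat \<Rightarrow> nat set) \<Rightarrow> (nat \<Rightarrow> nat set) \<Rightarrow> nat \<Rightarrow> nat set" where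
  "join a c w u = restrict (app a w u) {..<a + c}"

lemma join_apply: "join a c w u i = (if i < a then w i else if i < a + c then u (i - a) else undefined)"
  by (simp add: join_def app_def)

lemma join_cong:
  "(\<And>i. i < a \<Longrightarrow> w i = w' i) \<Longrightarrow> (\<And>i. i < c \<Longrightarrow> u i = u' i) \<Longrightarrow> join a c w u = join a c w' u'"
  by (auto simp: fun_eq_iff join_apply)

lemma join_in_tuples: "w \<in> tuples m a \<Longrightarrow> u \<in> tuples m c \<Longrightarrow> join a c w u \<in> tuples m (a + c)"
  by (auto simp: tuples_iff join_apply)

lemma join_upd_left: "k < a \<Longrightarrow> (join a c w u)(k := z) = join a c (w(k := z)) u"
  by (auto simp: fun_eq_iff join_apply)

lemma join_upd_right: "k < c \<Longrightarrow> (join a c w u)(a + k := z) = join a c w (u(k := z))"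
  by (auto simp: fun_eq_iff join_apply)

lemma intk_join: "intk m p (a + b) F = intk m p a (\<lambda>w. intk m p b (\<lambda>y. F (join a b w y)))"
proof (induction b arbitrary: F)
  case 0
  have "intk m p a (\<lambda>w. F (join a 0 w (\<lambda>_. undefined))) = intk m p a F"
    by (rule intk_cong, rule arg_cong[where f=F]) (auto simp: fun_eq_iff join_apply tuples_iff)
  then show ?case
    by (simp add: intk_0)
next
  case (Suc b)
  have ins_join: "ins (a + b) (a + b) z (join a b w y) = join a (Suc b) w (ins b b z y)" for z w y
    by (auto simp: fun_eq_iff join_apply ins_def)
  have "intk m p (a + Suc b) F = (\<Sum>z\<in>cube m. mu m p z * intk m p (a + b) (\<lambda>y. F (ins (a + b) (a + b) z y)))"
    using intk_Suc_ins[of "a + b" "a + b" m p F] by simp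
  also have "\<dots> = (\<Sum>z\<in>cube m. mu m p z * intk m p a (\<lambda>w. intk m p b (\<lambda>y. F (join a (Suc b) w (ins b b z y)))))"
    by (simp add: Suc.IH ins_join)
  also have "\<dots> = intk m p a (\<lambda>w. \<Sum>z\<in>cube m. mu m p z * intk m p b (\<lambda>y. F (join a (Suc b) w (ins b b z y))))"
    by (simp add: intk_sum intk_cmult)
  also have "\<dots> = intk m p a (\<lambda>w. intk m p (Suc b) (\<lambda>y. F (join a (Suc b) w y)))"
    by (simp add: intk_Suc_ins[of b b])
  finally show ?case .
qed

lemma avg_join_left: "k < a \<Longrightarrow> avg m p k F (join a c w u) = avg m p k (\<lambda>w. F (join a c w u)) w"
  by (simp add: avg_def join_upd_left)

lemma Phi_join_left: "k < a \<Longrightarrow> Phi m p k F (join a c w u) = Phi m p k (\<lambda>w. F (join a c w u)) w"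
  by (simp add: Phi_eq_avg avg_join_left)

lemma Phi_join_right:
  "k < c \<Longrightarrow> Phi m p (a + k) F (join a c w u) = Phi m p k (\<lambda>u. F (join a c w u)) u"
  by (simp add: Phi_eq_avg avg_def join_upd_right)

lemma phis_join_left: "t \<le> a \<Longrightarrow> phis m p t F (join a c w u) = phis m p t (\<lambda>w. F (join a c w u)) w"
proof (induction t arbitrary: w)
  case (Suc t)
  then have "(\<lambda>w. phis m p t F (join a c w u)) = phis m p t (\<lambda>w. F (join a c w u))"
    by auto
  with Suc show ?case
    by (simp add: Phi_join_left)
qed simp

lemma phis_join_right:
  "t \<le> c \<Longrightarrow> phis m p (a + t) F (join a c w u) = phis m p t (\<lambda>u. phis m p a F (join a c w u)) u"
proof (induction t arbitrary: u)
  case (Suc t)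
  then have "(\<lambda>u. phis m p (a + t) F (join a c w u)) = phis m p t (\<lambda>u. phis m p a F (join a c w u))"
    by auto
  with Suc show ?case
    using Phi_join_right[of t c m p a "phis m p (a + t) F" w u] by simp
qed simp

lemma Phi_intk_mult:
  assumes "\<And>w z. B w (u(k := z)) = B w u"
  shows "Phi m p k (\<lambda>u. intk m p a (\<lambda>w. A w u * B w u)) u = intk m p a (\<lambda>w. Phi m p k (A w) u * B w u)"
  using assms by (simp add: Phi_eq_avg avg_intk avg_mult_right_indep intk_diff left_diff_distrib)

lemma phis_intk_mult: "phis m p t (\<lambda>u. intk m p a (\<lambda>w. A w u * B w)) = (\<lambda>u. intk m p a (\<lambda>w. phis m p t (A w) u * B w))"
proof (induction t)
  case (Suc t)
  show ?case
    by (rule ext) (simp add: Suc.IH Phi_intk_mult[where B="\<lambda>w _. B w"])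
qed simp

lemma intk_phis_mult_phis:
  assumes "s \<le> a"
  shows "intk m p a (\<lambda>w. phis m p s F w * phis m p a G w) = intk m p a (\<lambda>w. F w * phis m p a G w)"
  using assms
proof (induction s)
  case (Suc s)
  then have "s < a" by simp
  have "intk m p a (\<lambda>w. avg m p s (phis m p s F) w * phis m p a G w)
      = intk m p a (\<lambda>w. phis m p s F w * avg m p s (phis m p a G) w)"
    by (rule intk_avg_mult_commute) (use \<open>s < a\<close> in simp)
  also have "\<dots> = 0"
    by (simp add: avg_phis_eq_0[OF \<open>s < a\<close>] intk_def)
  finally show ?case
    using Suc by (simp add: Phi_eq_avg left_diff_distrib intk_diff)
qed simp

lemma square_add_le: "((x::real) + y)\<^sup>2 \<le> 2 * x\<^sup>2 + 2 * y\<^sup>2"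
  using zero_le_power2[of "x - y"] unfolding power2_diff power2_sum by linarith

definition partial_sq :: "nat \<Rightarrow> real \<Rightarrow> nat \<Rightarrow> nat \<Rightarrow> ((nat \<Rightarrow> nat set) \<Rightarrow> real) \<Rightarrow> (nat \<Rightarrow> nat set) \<Rightarrow> real" where
  "partial_sq m p a c F u = intk m p a (\<lambda>w. (F (join a c w u))\<^sup>2)"

lemma contr_eq_partial_sq: "contr m p (a + c) (a + c) a (a + c) F F = partial_sq m p a c F"
proof
  fix u
  have "restrict (app a w (app c u (sh c u))) {..<a + c} = join a c w u" for w
    by (auto simp: fun_eq_iff join_def app_def)
  then show "contr m p (a + c) (a + c) a (a + c) F F u = partial_sq m p a c F u"
    by (simp add: contr_def partial_sq_def intk_def power2_eq_square mult.assoc flip: join_def)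
qed

lemma partial_sq_nonneg: "0 \<le> p \<Longrightarrow> p \<le> 1 \<Longrightarrow> 0 \<le> partial_sq m p a c F u"
  unfolding partial_sq_def by (simp add: intk_nonneg)

lemma partial_sq_Phi_left_le:
  "k < a \<Longrightarrow> 0 \<le> p \<Longrightarrow> p \<le> 1 \<Longrightarrow> partial_sq m p a c (Phi m p k F) u \<le> partial_sq m p a c F u"
  unfolding partial_sq_def Phi_join_left by (rule intk_Phi_square_le)

lemma partial_sq_Phi_right_le:
  assumes "k < c" "0 \<le> p" "p \<le> 1"
  shows "partial_sq m p a c (Phi m p (a + k) F) u
    \<le> 2 * partial_sq m p a c F u + 2 * avg m p k (partial_sq m p a c F) u"
proof -
  have "partial_sq m p a c (Phi m p (a + k) F) u
      = intk m p a (\<lambda>w. (F (join a c w u) - avg m p k (\<lambda>u. F (join a c w u)) u)\<^sup>2)"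
    unfolding partial_sq_def Phi_join_right[OF assms(1)] by (simp add: Phi_eq_avg)
  also have "\<dots> \<le> intk m p a (\<lambda>w. 2 * (F (join a c w u))\<^sup>2 + 2 * avg m p k (\<lambda>u. (F (join a c w u))\<^sup>2) u)"
  proof (intro intk_mono assms(2,3))
    fix w
    show "(F (join a c w u) - avg m p k (\<lambda>u. F (join a c w u)) u)\<^sup>2
        \<le> 2 * (F (join a c w u))\<^sup>2 + 2 * avg m p k (\<lambda>u. (F (join a c w u))\<^sup>2) u"
      using square_add_le[of "F (join a c w u)" "- avg m p k (\<lambda>u. F (join a c w u)) u"]
        avg_square_le[OF assms(2,3), of m k "\<lambda>u. F (join a c w u)" u]
      by simp
  qed
  also have "\<dots> = 2 * partial_sq m p a c F u + 2 * avg m p k (partial_sq m p a c F) u"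
    by (simp add: partial_sq_def[abs_def] intk_add intk_cmult avg_intk)
  finally show ?thesis .
qed

lemma intk_partial_sq_Phi_le:
  assumes p: "0 \<le> p" "p \<le> 1" and k: "k < a + c"
  shows "intk m p c (\<lambda>u. (partial_sq m p a c (Phi m p k F) u)\<^sup>2)
    \<le> 16 * intk m p c (\<lambda>u. (partial_sq m p a c F u)\<^sup>2)"
proof (cases "k < a")
  case True
  have "intk m p c (\<lambda>u. (partial_sq m p a c (Phi m p k F) u)\<^sup>2) \<le> intk m p c (\<lambda>u. (partial_sq m p a c F u)\<^sup>2)"
    by (intro intk_mono p power_mono partial_sq_Phi_left_le partial_sq_nonneg True)
  moreover have "0 \<le> intk m p c (\<lambda>u. (partial_sq m p a c F u)\<^sup>2)"
    by (simp add: intk_nonneg p)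
  ultimately show ?thesis
    by linarith
next
  case False
  with k obtain l where kl: "k = a + l" and "l < c"
    by (metis add_diff_inverse_nat add_less_cancel_left)
  define N where "N = partial_sq m p a c F"
  have "intk m p c (\<lambda>u. (partial_sq m p a c (Phi m p k F) u)\<^sup>2)
      \<le> intk m p c (\<lambda>u. 8 * (N u)\<^sup>2 + 8 * avg m p l (\<lambda>u. (N u)\<^sup>2) u)"
  proof (rule intk_mono[OF p])
    fix u
    have "(partial_sq m p a c (Phi m p k F) u)\<^sup>2 \<le> (2 * N u + 2 * avg m p l N u)\<^sup>2"
      unfolding N_def kl
      by (intro power_mono partial_sq_Phi_right_le partial_sq_nonneg \<open>l < c\<close> p)
    also have "\<dots> \<le> 8 * (N u)\<^sup>2 + 8 * (avg m p l N u)\<^sup>2"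
      using square_add_le[of "2 * N u" "2 * avg m p l N u"] by (simp add: power_mult_distrib)
    also have "\<dots> \<le> 8 * (N u)\<^sup>2 + 8 * avg m p l (\<lambda>u. (N u)\<^sup>2) u"
      using avg_square_le[OF p, of m l N u] by simp
    finally show "(partial_sq m p a c (Phi m p k F) u)\<^sup>2 \<le> 8 * (N u)\<^sup>2 + 8 * avg m p l (\<lambda>u. (N u)\<^sup>2) u" .
  qed
  also have "\<dots> = 16 * intk m p c (\<lambda>u. (N u)\<^sup>2)"
    by (simp add: intk_add intk_cmult intk_avg[OF \<open>l < c\<close>])
  finally show ?thesis
    by (simp add: N_def)
qed

lemma intk_partial_sq_phis_le:
  assumes p: "0 \<le> p" "p \<le> 1"
  shows "t \<le> a + c \<Longrightarrow> intk m p c (\<lambda>u. (partial_sq m p a c (phis m p t F) u)\<^sup>2)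
    \<le> 16 ^ t * intk m p c (\<lambda>u. (partial_sq m p a c F u)\<^sup>2)"
proof (induction t)
  case (Suc t)
  have "intk m p c (\<lambda>u. (partial_sq m p a c (phis m p (Suc t) F) u)\<^sup>2)
      \<le> 16 * intk m p c (\<lambda>u. (partial_sq m p a c (phis m p t F) u)\<^sup>2)"
    using intk_partial_sq_Phi_le[OF p, of t a c m "phis m p t F"] Suc.prems by simp
  also have "\<dots> \<le> 16 ^ Suc t * intk m p c (\<lambda>u. (partial_sq m p a c F u)\<^sup>2)"
    using Suc by simp
  finally show ?case .
qed simp

lemma norm2_contr_all_shared_phis_le:
  assumes "0 \<le> p" "p \<le> 1" "t \<le> a + c"
  shows "norm2 m p c (contr m p (a + c) (a + c) a (a + c) (phis m p t F) (phis m p t F))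
    \<le> 4 ^ t * norm2 m p c (contr m p (a + c) (a + c) a (a + c) F F)"
proof -
  have "(16::real) ^ t = (4 ^ t)\<^sup>2"
    by (simp add: power2_eq_square flip: power_mult_distrib)
  then have "sqrt (16 ^ t * intk m p c (\<lambda>u. (partial_sq m p a c F u)\<^sup>2))
      = 4 ^ t * sqrt (intk m p c (\<lambda>u. (partial_sq m p a c F u)\<^sup>2))"
    by (simp add: real_sqrt_mult)
  with intk_partial_sq_phis_le[OF assms] show ?thesis
    unfolding norm2_def contr_eq_partial_sq by (metis real_sqrt_le_mono)
qed

definition gram :: "nat \<Rightarrow> real \<Rightarrow> nat \<Rightarrow> nat \<Rightarrow> ((nat \<Rightarrow> nat set) \<Rightarrow> real) \<Rightarrow> (nat \<Rightarrow> nat set) \<Rightarrow> real" where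
  "gram m p a c F v = intk m p a (\<lambda>w. F (join a c w v) * F (join a c w (sh c v)))"

lemma contr_eq_gram: "contr m p (a + c) (a + c) a a F F = gram m p a c F"
proof
  fix u
  have "app 0 u X = X" for X :: "nat \<Rightarrow> nat set"
    by (simp add: app_def)
  then show "contr m p (a + c) (a + c) a a F F u = gram m p a c F u"
    by (simp add: contr_def gram_def intk_def mult.assoc flip: join_def)
qed

lemma sh_upd_low: "k < c \<Longrightarrow> sh c (v(k := z)) = sh c v"
  by (auto simp: sh_def fun_eq_iff)

lemma sh_upd_high: "sh c (v(k + c := z)) = (sh c v)(k := z)"
  by (auto simp: sh_def fun_eq_iff)

lemma join_upd_high: "c \<le> k \<Longrightarrow> join a c w (v(k := z)) = join a c w v"
  by (rule join_cong) auto

lemma gram_Phi_right: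
  assumes "k < c"
  shows "gram m p a c (Phi m p (a + k) F) = Phi m p k (Phi m p (k + c) (gram m p a c F))"
proof
  fix v
  define A where "A = (\<lambda>w v. F (join a c w v))"
  define B where "B = (\<lambda>w v. F (join a c w (sh c v)))"
  have A_indep: "A w (v(k + c := z)) = A w v" for w v z
    by (simp add: A_def join_upd_high)
  have PB_indep: "Phi m p (k + c) (B w) (v(k := z)) = Phi m p (k + c) (B w) v" for w v z
  proof -
    have "sh c (v(k := z, k + c := z')) = sh c (v(k + c := z'))" for z'
      unfolding sh_def using assms by (intro ext) auto
    then show ?thesis
      using assms by (simp add: Phi_eq_avg avg_def B_def sh_upd_low)
  qed
  have "Phi m p (k + c) (gram m p a c F) = (\<lambda>u. intk m p a (\<lambda>w. A w u * Phi m p (k + c) (B w) u))"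
  proof
    fix u
    have "gram m p a c F = (\<lambda>u. intk m p a (\<lambda>w. B w u * A w u))"
      by (simp add: fun_eq_iff gram_def A_def B_def mult.commute)
    then have "Phi m p (k + c) (gram m p a c F) u = intk m p a (\<lambda>w. Phi m p (k + c) (B w) u * A w u)"
      by (simp only: Phi_intk_mult A_indep)
    then show "Phi m p (k + c) (gram m p a c F) u = intk m p a (\<lambda>w. A w u * Phi m p (k + c) (B w) u)"
      by (simp add: mult.commute)
  qed
  then have "Phi m p k (Phi m p (k + c) (gram m p a c F)) v
      = intk m p a (\<lambda>w. Phi m p k (A w) v * Phi m p (k + c) (B w) v)"
    by (simp add: Phi_intk_mult PB_indep)
  also have "\<dots> = gram m p a c (Phi m p (a + k) F) v"
    unfolding gram_def A_def B_def Phi_join_right[OF assms]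
    by (simp add: Phi_eq_avg avg_def sh_upd_high)
  finally show "gram m p a c (Phi m p (a + k) F) v = Phi m p k (Phi m p (k + c) (gram m p a c F)) v" ..
qed

lemma intk_gram_Phi_right_le:
  assumes "0 \<le> p" "p \<le> 1" "k < c"
  shows "intk m p (2 * c) (\<lambda>v. (gram m p a c (Phi m p (a + k) F) v)\<^sup>2)
    \<le> intk m p (2 * c) (\<lambda>v. (gram m p a c F v)\<^sup>2)"
proof -
  have "intk m p (2 * c) (\<lambda>v. (gram m p a c (Phi m p (a + k) F) v)\<^sup>2)
      \<le> intk m p (2 * c) (\<lambda>v. (Phi m p (k + c) (gram m p a c F) v)\<^sup>2)"
    unfolding gram_Phi_right[OF assms(3)] by (rule intk_Phi_square_le) (use assms in auto)
  also have "\<dots> \<le> intk m p (2 * c) (\<lambda>v. (gram m p a c F v)\<^sup>2)"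
    by (rule intk_Phi_square_le) (use assms in auto)
  finally show ?thesis .
qed

definition swap_blocks :: "nat \<Rightarrow> nat \<Rightarrow> ((nat \<Rightarrow> nat set) \<Rightarrow> real) \<Rightarrow> (nat \<Rightarrow> nat set) \<Rightarrow> real" where
  "swap_blocks a c F x = F (join a c (sh c x) x)"

lemma swap_blocks_join: "swap_blocks a c F (join c a y w) = F (join a c w y)"
  unfolding swap_blocks_def by (rule arg_cong[where f=F], rule join_cong) (auto simp: sh_def join_apply)

lemma Phi_swap_blocks: "k < a \<Longrightarrow> swap_blocks a c (Phi m p k F) = Phi m p (c + k) (swap_blocks a c F)"
proof
  fix x assume "k < a"
  have "join a c (sh c (x(c + k := z))) (x(c + k := z)) = (join a c (sh c x) x)(k := z)" for z
    unfolding join_upd_left[OF \<open>k < a\<close>] by (rule join_cong) (auto simp: sh_def)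
  then show "swap_blocks a c (Phi m p k F) x = Phi m p (c + k) (swap_blocks a c F) x"
    by (simp add: swap_blocks_def Phi_eq_avg avg_def)
qed

lemma sum_square_sum_transpose:
  fixes \<alpha> :: "'a \<Rightarrow> real" and \<beta> :: "'b \<Rightarrow> real"
  shows "(\<Sum>y\<in>B. \<beta> y * (\<Sum>y'\<in>B. \<beta> y' * (\<Sum>w\<in>A. \<alpha> w * (G w y * G w y'))\<^sup>2))
       = (\<Sum>w\<in>A. \<alpha> w * (\<Sum>w'\<in>A. \<alpha> w' * (\<Sum>y\<in>B. \<beta> y * (G w y * G w' y))\<^sup>2))"
proof -
  define T where "T = (\<lambda>y y' w w'. \<alpha> w * \<alpha> w' * \<beta> y * \<beta> y' * G w y * G w y' * G w' y * G w' y')"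
  have "(\<Sum>y\<in>B. \<beta> y * (\<Sum>y'\<in>B. \<beta> y' * (\<Sum>w\<in>A. \<alpha> w * (G w y * G w y'))\<^sup>2))
      = (\<Sum>y\<in>B. \<Sum>y'\<in>B. \<Sum>w\<in>A. \<Sum>w'\<in>A. T y y' w w')"
    by (simp add: T_def power2_eq_square sum_product sum_distrib_left mult_ac)
  also have "\<dots> = (\<Sum>y\<in>B. \<Sum>w\<in>A. \<Sum>w'\<in>A. \<Sum>y'\<in>B. T y y' w w')"
    by (intro sum.cong refl, subst sum.swap) (intro sum.cong refl sum.swap)
  also have "\<dots> = (\<Sum>w\<in>A. \<Sum>w'\<in>A. \<Sum>y\<in>B. \<Sum>y'\<in>B. T y y' w w')"
    by (subst sum.swap) (intro sum.cong refl sum.swap)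
  also have "\<dots> = (\<Sum>w\<in>A. \<alpha> w * (\<Sum>w'\<in>A. \<alpha> w' * (\<Sum>y\<in>B. \<beta> y * (G w y * G w' y))\<^sup>2))"
    by (simp add: T_def power2_eq_square sum_product sum_distrib_left mult_ac)
  finally show ?thesis .
qed

lemma intk_gram_swap_blocks:
  "intk m p (2 * c) (\<lambda>v. (gram m p a c F v)\<^sup>2) = intk m p (2 * a) (\<lambda>v. (gram m p c a (swap_blocks a c F) v)\<^sup>2)"
proof -
  have gram_join: "gram m p a c F (join c c y y') = intk m p a (\<lambda>w. F (join a c w y) * F (join a c w y'))" for y y'
  proof -
    have "join a c w (join c c y y') = join a c w y" "join a c w (sh c (join c c y y')) = join a c w y'" for w
      by (rule join_cong; auto simp: join_apply sh_def)+
    then show ?thesis by (simp add: gram_def)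
  qed
  have gram_swap_join: "gram m p c a (swap_blocks a c F) (join a a w w')
      = intk m p c (\<lambda>y. F (join a c w y) * F (join a c w' y))" for w w'
  proof -
    have "join c a y (join a a w w') = join c a y w" "join c a y (sh a (join a a w w')) = join c a y w'" for y
      by (rule join_cong; auto simp: join_apply sh_def)+
    then show ?thesis by (simp add: gram_def swap_blocks_join)
  qed
  show ?thesis
    unfolding mult_2 intk_join gram_join gram_swap_join
    unfolding intk_def by (rule sum_square_sum_transpose)
qed

lemma intk_gram_Phi_le:
  assumes p: "0 \<le> p" "p \<le> 1" and k: "k < a + c"
  shows "intk m p (2 * c) (\<lambda>v. (gram m p a c (Phi m p k F) v)\<^sup>2) \<le> intk m p (2 * c) (\<lambda>v. (gram m p a c F v)\<^sup>2)"
proof (cases "k < a")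
  case True
  have "intk m p (2 * c) (\<lambda>v. (gram m p a c (Phi m p k F) v)\<^sup>2)
      = intk m p (2 * a) (\<lambda>v. (gram m p c a (swap_blocks a c (Phi m p k F)) v)\<^sup>2)"
    by (rule intk_gram_swap_blocks)
  also have "\<dots> = intk m p (2 * a) (\<lambda>v. (gram m p c a (Phi m p (c + k) (swap_blocks a c F)) v)\<^sup>2)"
    by (simp only: Phi_swap_blocks[OF True])
  also have "\<dots> \<le> intk m p (2 * a) (\<lambda>v. (gram m p c a (swap_blocks a c F) v)\<^sup>2)"
    by (rule intk_gram_Phi_right_le[OF p True])
  also have "\<dots> = intk m p (2 * c) (\<lambda>v. (gram m p a c F v)\<^sup>2)"
    by (rule intk_gram_swap_blocks[symmetric])
  finally show ?thesis .
next
  case False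
  with k obtain l where "k = a + l" "l < c"
    by (metis add_diff_inverse_nat add_less_cancel_left)
  then show ?thesis
    using intk_gram_Phi_right_le[OF p] by simp
qed

lemma intk_gram_phis_le:
  assumes p: "0 \<le> p" "p \<le> 1"
  shows "t \<le> a + c \<Longrightarrow> intk m p (2 * c) (\<lambda>v. (gram m p a c (phis m p t F) v)\<^sup>2)
    \<le> intk m p (2 * c) (\<lambda>v. (gram m p a c F v)\<^sup>2)"
proof (induction t)
  case (Suc t)
  then show ?case
    using intk_gram_Phi_le[OF p, of t a c m "phis m p t F"] by simp
qed simp

lemma norm2_contr_none_shared_phis_le:
  assumes "0 \<le> p" "p \<le> 1" "t \<le> a + c"
  shows "norm2 m p (2 * c) (contr m p (a + c) (a + c) a a (phis m p t F) (phis m p t F))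
    \<le> norm2 m p (2 * c) (contr m p (a + c) (a + c) a a F F)"
  unfolding norm2_def contr_eq_gram
  using intk_gram_phis_le[OF assms] by (rule real_sqrt_le_mono)

lemma hj_eq_intk: "hj m p r h j x = intk m p (r - j) (\<lambda>y. h (restrict (app j x y) {..<r}))"
  by (simp add: hj_def intk_def)

definition cycle_perm :: "nat \<Rightarrow> nat \<Rightarrow> nat \<Rightarrow> nat" where
  "cycle_perm k n i = (if i < k then i else if i < n - 1 then Suc i else if i = n - 1 then k else i)"

lemma bij_betw_cycle_perm:
  assumes "k < n" "n \<le> r"
  shows "bij_betw (cycle_perm k n) {..<r} {..<r}"
proof (rule bij_betw_byWitness[where f' = "\<lambda>i. if i < k then i else if i = k then n - 1 else if i < n then i - 1 else i"])
  show "\<forall>i\<in>{..<r}. (if cycle_perm k n i < k then cycle_perm k n i else if cycle_perm k n i = k then n - 1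
      else if cycle_perm k n i < n then cycle_perm k n i - 1 else cycle_perm k n i) = i"
    using assms by (auto simp: cycle_perm_def)
  show "\<forall>i\<in>{..<r}. cycle_perm k n (if i < k then i else if i = k then n - 1 else if i < n then i - 1 else i) = i"
    using assms by (auto simp: cycle_perm_def)
  show "cycle_perm k n ` {..<r} \<subseteq> {..<r}"
    using assms by (auto simp: cycle_perm_def)
qed (use assms in auto)

lemma avg_hj:
  assumes sym: "symmetric_fun m r h" and kn: "k < n" and nr: "n \<le> r" and x: "x \<in> tuples m n"
  shows "avg m p k (hj m p r h n) x = hj m p r h (n - 1) (del k x)"
proof -
  have rn: "r - (n - 1) = Suc (r - n)"
    using kn nr by simp
  have permute: "h (restrict (app (n - 1) (del k x) (ins (r - n) 0 z y)) {..<r}) = h (restrict (app n (x(k := z)) y) {..<r})"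
    if z: "z \<in> cube m" and y: "y \<in> tuples m (r - n)" for z y
  proof -
    define v where "v = restrict (app n (x(k := z)) y) {..<r}"
    have "v \<in> tuples m r"
      using x y z kn nr unfolding v_def tuples_iff by (auto simp: app_def)
    moreover have "restrict (v \<circ> cycle_perm k n) {..<r} = restrict (app (n - 1) (del k x) (ins (r - n) 0 z y)) {..<r}"
      using kn nr unfolding v_def by (intro ext) (auto simp: cycle_perm_def app_def del_def ins_def)
    ultimately show ?thesis
      using sym bij_betw_cycle_perm[OF kn nr] unfolding symmetric_fun_def v_def by metis
  qed
  have "hj m p r h (n - 1) (del k x)
      = (\<Sum>z\<in>cube m. mu m p z * intk m p (r - n) (\<lambda>y. h (restrict (app (n - 1) (del k x) (ins (r - n) 0 z y)) {..<r})))"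
    unfolding hj_eq_intk rn by (rule intk_Suc_ins) simp
  also have "\<dots> = (\<Sum>z\<in>cube m. mu m p z * intk m p (r - n) (\<lambda>y. h (restrict (app n (x(k := z)) y) {..<r})))"
    by (intro sum.cong refl arg_cong2[where f="(*)"] intk_cong permute)
  also have "\<dots> = avg m p k (hj m p r h n) x"
    by (simp add: avg_def hj_eq_intk)
  finally show ?thesis ..
qed

lemma phis_eq_phis_comp:
  assumes "\<And>x. x \<in> S \<Longrightarrow> F x = F' (g x)"
    and "\<And>x k z. x \<in> S \<Longrightarrow> k < s \<Longrightarrow> z \<in> cube m \<Longrightarrow> x(k := z) \<in> S"
    and "\<And>x k z. k < s \<Longrightarrow> g (x(k := z)) = (g x)(k := z)"
  shows "x \<in> S \<Longrightarrow> phis m p s F x = phis m p s F' (g x)"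
  using assms(2,3)
proof (induction s arbitrary: x)
  case 0
  then show ?case using assms(1) by simp
next
  case (Suc s)
  have IH: "y \<in> S \<Longrightarrow> phis m p s F y = phis m p s F' (g y)" for y
    using Suc.IH[of y] Suc.prems by auto
  have "phis m p s F (x(s := z)) = phis m p s F' ((g x)(s := z))" if "z \<in> cube m" for z
    using IH Suc.prems that by (metis lessI)
  then have "avg m p s (phis m p s F) x = avg m p s (phis m p s F') (g x)"
    by (simp add: avg_def)
  with IH[OF \<open>x \<in> S\<close>] show ?case
    by (simp add: Phi_eq_avg)
qed

lemma avg_phis_hj:
  assumes sym: "symmetric_fun m r h" and "s \<le> b" "Suc b \<le> r" and w: "w \<in> tuples m (Suc b)"
  shows "avg m p s (phis m p s (hj m p r h (Suc b))) w = phis m p s (hj m p r h b) (del s w)"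
proof -
  have "avg m p s (phis m p s (hj m p r h (Suc b))) w = phis m p s (avg m p s (hj m p r h (Suc b))) w"
    by (simp add: avg_phis_commute)
  also have "\<dots> = phis m p s (hj m p r h b) (del s w)"
  proof (rule phis_eq_phis_comp[where S="tuples m (Suc b)"])
    show "avg m p s (hj m p r h (Suc b)) x = hj m p r h b (del s x)" if "x \<in> tuples m (Suc b)" for x
      using avg_hj[OF sym _ _ that, of s p] assms by simp
    show "x(k := z) \<in> tuples m (Suc b)" if "x \<in> tuples m (Suc b)" "k < s" "z \<in> cube m" for x k z
      using that assms by (auto simp: tuples_iff)
    show "del s (x(k := z)) = (del s x)(k := z)" if "k < s" for x k z
      using that by (rule del_upd)
  qed (rule w)
  finally show ?thesis .
qed

definition hj_contr :: "nat \<Rightarrow> real \<Rightarrow> nat \<Rightarrow> ((nat \<Rightarrow> nat set) \<Rightarrow> real) \<Rightarrow> nat \<Rightarrow> nat \<Rightarrow> nat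
    \<Rightarrow> (nat \<Rightarrow> nat set) \<Rightarrow> real" where
  "hj_contr m p r h a t c u = intk m p a (\<lambda>w. hj m p r h (a + c) (join a c w u) * phis m p t (hj m p r h a) w)"

lemma del_join: "s < Suc b \<Longrightarrow> del s (join (Suc b) c w u) = join b c (del s w) u"
  by (auto simp: fun_eq_iff del_def join_apply)

lemma hj_contr_Suc:
  assumes sym: "symmetric_fun m r h" and sb: "s \<le> b" and r: "Suc b + c \<le> r" and u: "u \<in> tuples m c"
  shows "hj_contr m p r h (Suc b) (Suc s) c u = hj_contr m p r h (Suc b) s c u - hj_contr m p r h b s c u"
proof -
  define H where "H = (\<lambda>w. hj m p r h (Suc b + c) (join (Suc b) c w u))"
  define P where "P = phis m p s (hj m p r h (Suc b))"
  have "s < Suc b" "Suc b \<le> r"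
    using sb r by simp_all
  have avg_H: "avg m p s H w = hj m p r h (b + c) (join b c (del s w) u)" if "w \<in> tuples m (Suc b)" for w
  proof -
    have "avg m p s H w = avg m p s (hj m p r h (Suc b + c)) (join (Suc b) c w u)"
      by (simp add: H_def avg_join_left[OF \<open>s < Suc b\<close>])
    also have "\<dots> = hj m p r h (b + c) (del s (join (Suc b) c w u))"
      using avg_hj[OF sym _ _ join_in_tuples[OF that u]] \<open>s < Suc b\<close> r by simp
    finally show ?thesis
      by (simp add: del_join[OF \<open>s < Suc b\<close>])
  qed
  have "intk m p (Suc b) (\<lambda>w. H w * avg m p s P w) = intk m p (Suc b) (\<lambda>w. avg m p s (avg m p s H) w * P w)"
    using intk_avg_mult_commute[OF \<open>s < Suc b\<close>] by simp
  also have "\<dots> = intk m p (Suc b) (\<lambda>w. avg m p s H w * avg m p s P w)"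
    by (rule intk_avg_mult_commute[OF \<open>s < Suc b\<close>])
  also have "\<dots> = intk m p (Suc b) (\<lambda>w. hj m p r h (b + c) (join b c (del s w) u) * phis m p s (hj m p r h b) (del s w))"
    by (rule intk_cong) (simp add: avg_H P_def avg_phis_hj[OF sym sb \<open>Suc b \<le> r\<close>])
  also have "\<dots> = hj_contr m p r h b s c u"
    unfolding hj_contr_def by (rule intk_del[OF sb])
  finally have "intk m p (Suc b) (\<lambda>w. H w * avg m p s P w) = hj_contr m p r h b s c u" .
  then show ?thesis
    by (simp add: hj_contr_def H_def P_def Phi_eq_avg right_diff_distrib intk_diff)
qed

lemma norm2_nonneg: "0 \<le> p \<Longrightarrow> p \<le> 1 \<Longrightarrow> 0 \<le> norm2 m p c F"
  unfolding norm2_def by (simp add: intk_nonneg)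

lemma norm2_cmult: "norm2 m p k (\<lambda>u. a * F u) = \<bar>a\<bar> * norm2 m p k F"
  by (simp add: norm2_def power_mult_distrib intk_cmult real_sqrt_mult)

lemma norm2_eq_L2_set:
  "0 \<le> p \<Longrightarrow> p \<le> 1 \<Longrightarrow> norm2 m p c F = L2_set (\<lambda>u. sqrt (weight m p c u) * F u) (tuples m c)"
  unfolding norm2_def L2_set_def intk_def
  by (intro arg_cong[where f=sqrt] sum.cong refl) (simp add: power_mult_distrib weight_nonneg)

lemma norm2_diff_le:
  assumes p: "0 \<le> p" "p \<le> 1" and F: "\<And>u. u \<in> tuples m c \<Longrightarrow> F u = G u - H u"
  shows "norm2 m p c F \<le> norm2 m p c G + norm2 m p c H"
proof -
  have "norm2 m p c F
      = L2_set (\<lambda>u. sqrt (weight m p c u) * G u + - (sqrt (weight m p c u) * H u)) (tuples m c)"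
    unfolding norm2_eq_L2_set[OF p] by (intro L2_set_cong refl) (simp add: F algebra_simps)
  also have "\<dots> \<le> L2_set (\<lambda>u. sqrt (weight m p c u) * G u) (tuples m c)
      + L2_set (\<lambda>u. - (sqrt (weight m p c u) * H u)) (tuples m c)"
    by (rule L2_set_triangle_ineq)
  also have "\<dots> = norm2 m p c G + norm2 m p c H"
    by (simp add: norm2_eq_L2_set[OF p] L2_set_def)
  finally show ?thesis .
qed

lemma norm2_hj_contr_le:
  assumes sym: "symmetric_fun m r h" and p: "0 \<le> p" "p \<le> 1"
  shows "t \<le> a \<Longrightarrow> a + c \<le> r
    \<Longrightarrow> norm2 m p c (hj_contr m p r h a t c) \<le> 2 ^ t * (\<Sum>s\<le>a. norm2 m p c (hj_contr m p r h s 0 c))"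
proof (induction t arbitrary: a)
  case 0
  show ?case
    by (simp, rule member_le_sum) (auto simp: norm2_nonneg[OF p])
next
  case (Suc t)
  then obtain b where a: "a = Suc b" and "t \<le> b"
    by (cases a) auto
  have "norm2 m p c (hj_contr m p r h a (Suc t) c)
      \<le> norm2 m p c (hj_contr m p r h a t c) + norm2 m p c (hj_contr m p r h b t c)"
    by (rule norm2_diff_le[OF p]) (use hj_contr_Suc[OF sym \<open>t \<le> b\<close>] Suc.prems a in auto)
  also have "\<dots> \<le> 2 ^ t * (\<Sum>s\<le>a. norm2 m p c (hj_contr m p r h s 0 c))
      + 2 ^ t * (\<Sum>s\<le>b. norm2 m p c (hj_contr m p r h s 0 c))"
    using Suc.IH[of a] Suc.IH[of b] Suc.prems a \<open>t \<le> b\<close> by (intro add_mono) auto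
  also have "(\<Sum>s\<le>b. norm2 m p c (hj_contr m p r h s 0 c)) \<le> (\<Sum>s\<le>a. norm2 m p c (hj_contr m p r h s 0 c))"
    unfolding a by (rule sum_mono2) (auto simp: norm2_nonneg[OF p])
  finally show ?case
    by simp
qed

lemma contr_eq_intk_join:
  "contr m p (a + c) a a a F G u = intk m p a (\<lambda>w. F (join a c w u) * G w)"
proof -
  have "restrict (app a w X) {..<a} = w" if "w \<in> tuples m a" for w X
    using that by (auto simp: fun_eq_iff app_def tuples_iff)
  then show ?thesis
    unfolding contr_def intk_def by (intro sum.cong refl) (simp add: join_def mult.assoc)
qed

lemma hj_contr_eq_contr: "hj_contr m p r h s 0 c = contr m p (c + s) s s s (hj m p r h (c + s)) (hj m p r h s)"
  by (simp add: fun_eq_iff hj_contr_def add.commute[of c s] contr_eq_intk_join)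

lemma norm2_hj_contr_0: "norm2 m p c (hj_contr m p r h 0 0 c) = norm2 m p c (hj m p r h c) * \<bar>intk m p r h\<bar>"
proof -
  have "hj m p r h 0 x = intk m p r h" for x
    unfolding hj_eq_intk diff_zero
    by (intro intk_cong arg_cong[where f=h]) (auto simp: app_def tuples_iff fun_eq_iff)
  moreover have "hj m p r h c (join 0 c w u) = hj m p r h c u" for w u
    unfolding hj_eq_intk by (intro intk_cong arg_cong[where f=h] restrict_ext) (simp add: app_def join_apply)
  ultimately have "hj_contr m p r h 0 0 c = (\<lambda>u. intk m p r h * hj m p r h c u)"
    by (simp add: fun_eq_iff hj_contr_def intk_0 mult.commute)
  then show ?thesis
    by (simp add: norm2_cmult mult.commute)
qed

lemma contr_htilde_eq_phis_hj_contr: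
  "contr m p (i + c) i i i (htilde m p r h (i + c)) (htilde m p r h i) = phis m p c (hj_contr m p r h i i c)"
proof
  fix u
  have "contr m p (i + c) i i i (htilde m p r h (i + c)) (htilde m p r h i) u
      = intk m p i (\<lambda>w. phis m p c (\<lambda>u. phis m p i (hj m p r h (i + c)) (join i c w u)) u * phis m p i (hj m p r h i) w)"
    by (simp add: contr_eq_intk_join htilde_def phis_join_right)
  also have "\<dots> = phis m p c (\<lambda>u. intk m p i (\<lambda>w. phis m p i (hj m p r h (i + c)) (join i c w u) * phis m p i (hj m p r h i) w)) u"
    by (simp add: phis_intk_mult)
  also have "(\<lambda>u. intk m p i (\<lambda>w. phis m p i (hj m p r h (i + c)) (join i c w u) * phis m p i (hj m p r h i) w))
      = hj_contr m p r h i i c"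
    unfolding hj_contr_def phis_join_left[OF order_refl] intk_phis_mult_phis[OF order_refl] ..
  finally show "contr m p (i + c) i i i (htilde m p r h (i + c)) (htilde m p r h i) u = phis m p c (hj_contr m p r h i i c) u" .
qed

lemma norm2_contr_htilde_le:
  assumes sym: "symmetric_fun m r h" and p: "0 \<le> p" "p \<le> 1" and "i + c \<le> r"
  shows "norm2 m p c (contr m p (i + c) i i i (htilde m p r h (i + c)) (htilde m p r h i))
    \<le> 2 ^ i * (norm2 m p c (hj m p r h c) * \<bar>intk m p r h\<bar>
      + (\<Sum>s=1..i. norm2 m p c (contr m p (c + s) s s s (hj m p r h (c + s)) (hj m p r h s))))"
proof -
  have "norm2 m p c (contr m p (i + c) i i i (htilde m p r h (i + c)) (htilde m p r h i))
      \<le> norm2 m p c (hj_contr m p r h i i c)"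
    unfolding contr_htilde_eq_phis_hj_contr norm2_def
    by (intro real_sqrt_le_mono intk_phis_square_le order_refl p)
  also have "\<dots> \<le> 2 ^ i * (\<Sum>s\<le>i. norm2 m p c (hj_contr m p r h s 0 c))"
    by (rule norm2_hj_contr_le[OF sym p order_refl \<open>i + c \<le> r\<close>])
  also have "(\<Sum>s\<le>i. norm2 m p c (hj_contr m p r h s 0 c))
      = norm2 m p c (hj_contr m p r h 0 0 c) + (\<Sum>s=1..i. norm2 m p c (hj_contr m p r h s 0 c))"
    unfolding atMost_atLeast0 sum.atLeast_Suc_atMost[OF le0] by simp
  also have "norm2 m p c (hj_contr m p r h 0 0 c) = norm2 m p c (hj m p r h c) * \<bar>intk m p r h\<bar>"
    by (rule norm2_hj_contr_0)
  finally show ?thesis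
    by (simp add: hj_contr_eq_contr)
qed

theorem lemma4p2:
  fixes r :: nat
  shows "\<exists>C::real. \<forall>(m::nat) (p::real) h i j.
     0 < p \<and> p < 1 \<and> symmetric_fun m r h \<and> i < j \<and> j \<le> r \<longrightarrow>
       norm2 m p (j - i) (contr m p j j i j (htilde m p r h j) (htilde m p r h j))
         \<le> C * norm2 m p (j - i) (contr m p j j i j (hj m p r h j) (hj m p r h j))
     \<and> norm2 m p (2 * (j - i)) (contr m p j j i i (htilde m p r h j) (htilde m p r h j))
         \<le> C * norm2 m p (2 * (j - i)) (contr m p j j i i (hj m p r h j) (hj m p r h j))
     \<and> norm2 m p (j - i) (contr m p j i i i (htilde m p r h j) (htilde m p r h i))
         \<le> C * (norm2 m p (j - i) (hj m p r h (j - i)) * \<bar>intk m p r h\<bar>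
                + (\<Sum>s=1..i. norm2 m p (j - i)
                     (contr m p (j - i + s) s s s (hj m p r h (j - i + s)) (hj m p r h s))))"
  apply (intro exI[of _ "4 ^ r"] allI impI)
  subgoal premises assms for m p h i j
  proof -
    have p: "0 \<le> p" "p \<le> 1" and sym: "symmetric_fun m r h" and "i < j" "j \<le> r"
      using assms by auto
    then obtain c where j: "j = i + c"
      using less_imp_add_positive by blast
    have "i \<le> r" "i + c \<le> r"
      using \<open>i < j\<close> \<open>j \<le> r\<close> j by simp_all
    then have pow: "(4::real) ^ (i + c) \<le> 4 ^ r" "(2::real) ^ i \<le> 4 ^ r" "(1::real) \<le> 4 ^ r"
      using order_trans[OF power_mono[of "2::real" 4 i] power_increasing[of i r "4::real"]]
      by (simp_all add: power_increasing)
    have scale: "x \<le> 4 ^ r * y" if "x \<le> a * y" "a \<le> 4 ^ r" "0 \<le> y" for x a y :: real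
      using that by (meson mult_right_mono order_trans)
    have all_shared: "norm2 m p c (contr m p (i + c) (i + c) i (i + c) (htilde m p r h (i + c)) (htilde m p r h (i + c)))
        \<le> 4 ^ (i + c) * norm2 m p c (contr m p (i + c) (i + c) i (i + c) (hj m p r h (i + c)) (hj m p r h (i + c)))"
      unfolding htilde_def by (rule norm2_contr_all_shared_phis_le[OF p order_refl])
    have none_shared: "norm2 m p (2 * c) (contr m p (i + c) (i + c) i i (htilde m p r h (i + c)) (htilde m p r h (i + c)))
        \<le> 1 * norm2 m p (2 * c) (contr m p (i + c) (i + c) i i (hj m p r h (i + c)) (hj m p r h (i + c)))"
      unfolding htilde_def using norm2_contr_none_shared_phis_le[OF p order_refl] by simp
    show ?thesis
      unfolding j add_diff_cancel_left'
      by (intro conjI scale[OF all_shared] scale[OF none_shared] scale[OF norm2_contr_htilde_le[OF sym p \<open>i + c \<le> r\<close>]])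
        (use pow in \<open>auto intro!: add_nonneg_nonneg mult_nonneg_nonneg sum_nonneg norm2_nonneg p\<close>)
  qed
  done

end
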